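(* The function $g(z)=\sum_{n=0}^\infty\frac{z^n}{(2n+1)!}$ is holomorphic on $\mathbb C$, and $g'(z)\ne0$ for all $z$ in the open disc $B_{\pi^2}(0)=\{|z|<\pi^2\}$. Moreover, the restriction of $g$ to the circle $\partial B_{\pi^2}(0)$ is a homeomorphism onto its image, and this image (a Jordan curve) surrounds the disc $B_1(1)=\{|w-1|<1\}$, i.e. $B_1(1)$ is contained in the bounded component of the complement of $g(\partial B_{\pi^2}(0))$.
   Context: For real $r>-\pi^2$ this $g$ coincides with $\sinh(\sqrt r)/\sqrt r$ (with value $1$ at $r=0$, and $\sin(\sqrt{-r})/\sqrt{-r}$ for $r<0$). *)

theory Defs
  imports "HOL-Complex_Analysis.Complex_Analysis"
begin

definition g_fun :: "complex \<Rightarrow> complex" where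
  "g_fun z = (\<Sum>n. z ^ n / of_nat (fact (2 * n + 1)))"

end

theory Submission
  imports Defs
begin

text \<open>
  On the circle |z| = \<pi>^2 the first four terms of Re g'(z) dominate the remaining
  ones, so Re g' \<ge> 1/25 there and, by the minimum principle, on the whole closed disc.
  A function whose derivative has positive real part on a convex set is injective
  (Noshiro-Warschawski), so g maps the circle homeomorphically onto its image.
  Writing g z = 1 + z h(z), the value g(-\<pi>^2) = sin \<pi> / \<pi> = 0 gives h(-\<pi>^2) = 1/\<pi>^2,
  and an estimate of the same kind shows Re h(z) \<ge> h(-\<pi>^2) on the circle, whence
  |g z - 1| \<ge> 1 there. Hence B(1, 1) misses the image curve and lies in the component
  of g 0 = 1, which the open mapping theorem confines to the bounded set g(B(0, \<pi>^2)).
\<close>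

lemma suminf_le_ratio_bound:
  fixes a :: "nat \<Rightarrow> real"
  assumes nonneg: "\<And>n. 0 \<le> a n" and ratio: "\<And>n. a (Suc n) \<le> q * a n"
    and q: "0 \<le> q" "q < 1"
  shows "summable a" "suminf a \<le> a 0 / (1 - q)"
proof -
  have le_geometric: "a n \<le> a 0 * q ^ n" for n
  proof (induction n)
    case (Suc n)
    have "a (Suc n) \<le> q * a n" by (rule ratio)
    also have "\<dots> \<le> q * (a 0 * q ^ n)" using Suc q by (intro mult_left_mono) auto
    finally show ?case by (simp add: algebra_simps)
  qed simp
  have geometric: "summable (\<lambda>n. a 0 * q ^ n)"
    using q by (intro summable_mult summable_geometric) auto
  show "summable a"
    by (rule summable_comparison_test[OF _ geometric]) (use nonneg le_geometric in auto)
  then have "suminf a \<le> (\<Sum>n. a 0 * q ^ n)" by (rule suminf_le[OF le_geometric _ geometric])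
  also have "\<dots> = a 0 / (1 - q)" using q by (simp add: suminf_mult suminf_geometric divide_simps)
  finally show "suminf a \<le> a 0 / (1 - q)" .
qed

lemma sums_ge_partial_sum_minus_tail:
  fixes f b :: "nat \<Rightarrow> real"
  assumes "f sums s" and "summable b" and "\<And>n. - b n \<le> f (n + k)"
  shows "(\<Sum>i<k. f i) - suminf b \<le> s"
proof -
  have "summable f" using assms(1) by (rule sums_summable)
  then have "s = (\<Sum>n. f (n + k)) + (\<Sum>i<k. f i)"
    using suminf_split_initial_segment sums_unique[OF assms(1)] by metis
  moreover have "(\<Sum>n. - b n) \<le> (\<Sum>n. f (n + k))"
    using assms(3) summable_minus[OF assms(2)] summable_ignore_initial_segment[OF \<open>summable f\<close>]
    by (rule suminf_le)
  ultimately show ?thesis using suminf_minus[OF assms(2)] by linarith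
qed

lemma sums_Re_real_power_series:
  assumes "summable (\<lambda>n. of_real (c n) * z ^ n)"
  shows "(\<lambda>n. c n * Re (z ^ n)) sums Re (\<Sum>n. of_real (c n) * z ^ n)"
  using sums_Re[OF summable_sums[OF assms]] by simp

lemma one_minus_Re_power_le:
  fixes u :: complex
  assumes "cmod u = 1"
  shows "1 - Re (u ^ n) \<le> (real n)\<^sup>2 * (1 - Re u)"
proof -
  have sq: "(cmod (1 - v))\<^sup>2 = 2 - 2 * Re v" if "cmod v = 1" for v :: complex
    using that cmod_power2[of v] cmod_power2[of "1 - v"] by (simp add: power2_eq_square algebra_simps)
  have "cmod (1 ^ n - u ^ n) \<le> real n * cmod (1 - u)"
    by (rule norm_power_diff) (use assms in auto)
  then have "(cmod (1 - u ^ n))\<^sup>2 \<le> (real n * cmod (1 - u))\<^sup>2"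
    by (intro power_mono) auto
  then have "2 - 2 * Re (u ^ n) \<le> (real n)\<^sup>2 * (2 - 2 * Re u)"
    using sq[of "u ^ n"] sq[of u] assms by (simp add: norm_power power_mult_distrib)
  then show ?thesis by (simp add: algebra_simps)
qed

lemma Re_power_on_circle:
  assumes "cmod z = r"
  shows "Re (z ^ 2) = 2 * (Re z)\<^sup>2 - r\<^sup>2" "Re (z ^ 3) = 4 * (Re z) ^ 3 - 3 * r\<^sup>2 * Re z"
proof -
  have "r\<^sup>2 = (Re z)\<^sup>2 + (Im z)\<^sup>2" using assms cmod_power2[of z] by simp
  then show "Re (z ^ 2) = 2 * (Re z)\<^sup>2 - r\<^sup>2" "Re (z ^ 3) = 4 * (Re z) ^ 3 - 3 * r\<^sup>2 * Re z"
    by (simp_all add: power2_eq_square power3_eq_cube algebra_simps)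
qed

lemma Re_power_minus_power_ge:
  assumes "cmod z = r" and "0 < r"
  shows "- ((real n)\<^sup>2 * r ^ (n - 1) * (Re z + r)) \<le> Re (z ^ n) - (- r) ^ n"
proof (cases n)
  case (Suc m)
  define u where "u = - z / of_real r"
  have "cmod u = 1" using assms by (simp add: u_def norm_divide)
  have "z = of_real (- r) * u" using assms by (simp add: u_def)
  then have "z ^ n = of_real ((- r) ^ n) * u ^ n" by (metis of_real_power power_mult_distrib)
  then have Re_z: "Re (z ^ n) = (- r) ^ n * Re (u ^ n)" by simp
  have "\<bar>Re (u ^ n)\<bar> \<le> 1"
    using abs_Re_le_cmod[of "u ^ n"] \<open>cmod u = 1\<close> by (simp add: norm_power)
  then have "- (r ^ n * (1 - Re (u ^ n))) \<le> Re (z ^ n) - (- r) ^ n"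
    unfolding Re_z using \<open>0 < r\<close>
    by (cases "even n") (auto simp: algebra_simps mult_le_0_iff)
  moreover have "r ^ n * (1 - Re (u ^ n)) \<le> r ^ n * ((real n)\<^sup>2 * (1 - Re u))"
    using one_minus_Re_power_le[OF \<open>cmod u = 1\<close>] \<open>0 < r\<close> by (intro mult_left_mono) auto
  moreover have "r ^ n * ((real n)\<^sup>2 * (1 - Re u)) = (real n)\<^sup>2 * r ^ (n - 1) * (Re z + r)"
    using \<open>0 < r\<close> by (simp add: u_def Suc field_simps)
  ultimately show ?thesis by linarith
qed simp

lemma inj_on_if_Re_deriv_pos:
  fixes f :: "complex \<Rightarrow> complex"
  assumes "convex S"
    and deriv: "\<And>z. z \<in> S \<Longrightarrow> (f has_field_derivative f' z) (at z)"
    and pos: "\<And>z. z \<in> S \<Longrightarrow> 0 < Re (f' z)"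
  shows "inj_on f S"
proof (rule inj_onI, rule ccontr)
  fix z w assume z: "z \<in> S" and w: "w \<in> S" and eq: "f z = f w" and "z \<noteq> w"
  define d where "d = z - w"
  have "d \<noteq> 0" using \<open>z \<noteq> w\<close> by (simp add: d_def)
  define p where "p t = w + of_real t * d" for t
  have p_in: "p t \<in> S" if "0 \<le> t" "t \<le> 1" for t
  proof -
    have "p t = (1 - t) *\<^sub>R w + t *\<^sub>R z"
      by (simp add: p_def d_def scaleR_conv_of_real algebra_simps)
    then show ?thesis using convexD[OF \<open>convex S\<close> w z] that by simp
  qed
  \<comment> \<open>Along the segment from w to z, Re (cnj d * f) has derivative |d|^2 Re f' > 0.\<close>
  define \<phi> where "\<phi> t = Re (cnj d * f (p t))" for t
  have "DERIV \<phi> t :> Re (cnj d * (f' (p t) * d))" if "0 \<le> t" "t \<le> 1" for t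
  proof -
    have "((\<lambda>v. w + v * d) has_field_derivative d) (at (of_real t))"
      by (auto intro!: derivative_eq_intros)
    from DERIV_chain[of f, OF _ this] deriv[OF p_in[OF that]]
    have "((\<lambda>v. cnj d * f (w + v * d)) has_field_derivative cnj d * (f' (p t) * d)) (at (of_real t))"
      unfolding p_def by (intro DERIV_cmult) (simp add: o_def)
    then show ?thesis
      unfolding \<phi>_def p_def by (rule has_field_derivative_Re[OF has_vector_derivative_real_field])
  qed
  then obtain \<xi> where \<xi>: "0 < \<xi>" "\<xi> < 1" "\<phi> 1 - \<phi> 0 = Re (cnj d * (f' (p \<xi>) * d))"
    using MVT2[of 0 1 \<phi> "\<lambda>t. Re (cnj d * (f' (p t) * d))"] by force
  have "\<phi> 1 = \<phi> 0" using eq by (simp add: \<phi>_def p_def d_def)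
  moreover have "Re (cnj d * (f' (p \<xi>) * d)) = (cmod d)\<^sup>2 * Re (f' (p \<xi>))"
  proof -
    have "cnj d * (f' (p \<xi>) * d) = (cmod d)\<^sup>2 *\<^sub>R f' (p \<xi>)"
      by (subst scaleR_conv_of_real, subst complex_norm_square) (simp add: mult_ac)
    then show ?thesis by simp
  qed
  moreover have "0 < (cmod d)\<^sup>2 * Re (f' (p \<xi>))"
    using pos p_in \<xi> \<open>d \<noteq> 0\<close> by simp
  ultimately show False using \<xi>(3) by linarith
qed

lemma minimum_real_frontier:
  assumes "f holomorphic_on (interior S)" and "continuous_on (closure S) f" and "bounded S"
    and "\<And>z. z \<in> frontier S \<Longrightarrow> B \<le> Re (f z)" and "z \<in> S"
  shows "B \<le> Re (f z)"
  using maximum_real_frontier[OF holomorphic_on_minus continuous_on_minus, of f S "- B" z] assms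
  by simp

lemma connected_component_image_sphere_subset:
  assumes holf: "f holomorphic_on S" and "open S" "connected S" and cball: "cball a r \<subseteq> S"
    and nonconst: "\<not> f constant_on S" and x: "x \<in> f ` ball a r"
  shows "connected_component_set (- (f ` sphere a r)) x \<subseteq> f ` ball a r"
    (is "?C \<subseteq> ?U")
proof (cases "x \<in> f ` sphere a r")
  case False
  let ?V = "- (f ` cball a r)"
  have "open ?U"
    using open_mapping_thm[OF holf \<open>open S\<close> \<open>connected S\<close> open_ball _ nonconst] cball
    by (meson ball_subset_cball order_trans)
  moreover have "open ?V"
    using holomorphic_on_imp_continuous_on[OF holomorphic_on_subset[OF holf cball]]
    by (intro open_Compl compact_imp_closed compact_continuous_image) auto
  moreover have "?C \<subseteq> ?U \<union> ?V"
  proof -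
    have "cball a r \<subseteq> ball a r \<union> sphere a r" by (auto simp: less_le)
    then have "- (f ` sphere a r) \<subseteq> ?U \<union> ?V" by blast
    then show ?thesis using connected_component_subset by blast
  qed
  moreover have "?U \<inter> ?V \<inter> ?C = {}" by auto
  moreover have "x \<in> ?C" using False by simp
  ultimately have "?V \<inter> ?C = {}"
    using connectedD[OF connected_connected_component \<open>open ?U\<close> \<open>open ?V\<close>] x by blast
  with \<open>?C \<subseteq> ?U \<union> ?V\<close> show ?thesis by blast
qed (metis ComplD connected_component_eq_empty empty_subsetI)

definition g_coeff :: "nat \<Rightarrow> real" where
  "g_coeff n = 1 / fact (2 * n + 1)"

lemma g_coeff_nonneg: "0 \<le> g_coeff n"
  by (simp add: g_coeff_def)

lemma g_coeff_Suc: "g_coeff (Suc n) = g_coeff n / ((2 * n + 2) * (2 * n + 3))"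
proof -
  have "2 * Suc n + 1 = Suc (Suc (2 * n + 1))" by simp
  then show ?thesis unfolding g_coeff_def by (simp add: field_simps)
qed

lemma g_fun_power_series: "g_fun z = (\<Sum>n. of_real (g_coeff n) * z ^ n)"
  unfolding g_fun_def g_coeff_def by (simp add: field_simps del: fact_Suc)

lemma summable_g_coeff_shift:
  fixes z :: complex
  shows "summable (\<lambda>n. of_real (g_coeff (n + k)) * z ^ n)"
proof (rule summable_comparison_test[OF _ summable_exp[of "norm z"]])
  have "norm (of_real (g_coeff (n + k)) * z ^ n) \<le> inverse (fact n) * norm z ^ n" for n
  proof -
    have "(fact n :: real) \<le> fact (2 * (n + k) + 1)" by (rule fact_mono) simp
    then have "g_coeff (n + k) \<le> inverse (fact n)"
      unfolding g_coeff_def by (simp add: divide_simps)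
    then show ?thesis by (simp add: norm_mult norm_power g_coeff_nonneg mult_right_mono)
  qed
  then show "\<exists>N. \<forall>n\<ge>N. norm (of_real (g_coeff (n + k)) * z ^ n) \<le> inverse (fact n) * norm z ^ n"
    by blast
qed

lemma summable_g_coeff:
  fixes z :: complex
  shows "summable (\<lambda>n. of_real (g_coeff n) * z ^ n)"
  using summable_g_coeff_shift[of 0 z] by simp

definition g_deriv_coeff :: "nat \<Rightarrow> real" where
  "g_deriv_coeff n = real (Suc n) * g_coeff (Suc n)"

lemma g_deriv_coeff_nonneg: "0 \<le> g_deriv_coeff n"
  by (simp add: g_deriv_coeff_def g_coeff_nonneg)

lemma diffs_g_coeff: "diffs (\<lambda>n. of_real (g_coeff n)) = (\<lambda>n. of_real (g_deriv_coeff n) :: complex)"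
  by (simp add: diffs_def g_deriv_coeff_def fun_eq_iff)

lemma summable_g_deriv_coeff:
  fixes z :: complex
  shows "summable (\<lambda>n. of_real (g_deriv_coeff n) * z ^ n)"
  using termdiff_converges_all[OF summable_g_coeff] by (simp add: diffs_g_coeff)

lemma has_field_derivative_g_fun:
  "(g_fun has_field_derivative (\<Sum>n. of_real (g_deriv_coeff n) * z ^ n)) (at z)"
  using termdiffs_strong_converges_everywhere[OF summable_g_coeff]
  by (simp add: g_fun_power_series[abs_def] diffs_g_coeff)

lemma holomorphic_g_fun: "g_fun holomorphic_on UNIV"
  using has_field_derivative_g_fun by (auto simp: holomorphic_on_def field_differentiable_def
    intro: field_differentiable_at_within)

lemma deriv_g_fun: "deriv g_fun z = (\<Sum>n. of_real (g_deriv_coeff n) * z ^ n)"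
  by (rule DERIV_imp_deriv[OF has_field_derivative_g_fun])

definition h_fun :: "complex \<Rightarrow> complex" where
  "h_fun z = (\<Sum>n. of_real (g_coeff (Suc n)) * z ^ n)"

lemma g_fun_eq_h_fun: "g_fun z = 1 + z * h_fun z"
proof -
  have "(\<Sum>n. of_real (g_coeff (Suc n)) * z ^ Suc n) = g_fun z - of_real (g_coeff 0)"
    unfolding g_fun_power_series by (subst suminf_split_head[OF summable_g_coeff]) simp
  moreover have "(\<Sum>n. of_real (g_coeff (Suc n)) * z ^ Suc n) = z * h_fun z"
    using suminf_mult[OF summable_g_coeff_shift[of 1 z], of z]
    unfolding h_fun_def by (simp add: mult_ac)
  ultimately have "g_fun z - 1 = z * h_fun z" by (simp add: g_coeff_def)
  then show ?thesis by (metis add.commute diff_add_cancel)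
qed

lemma g_fun_zero: "g_fun 0 = 1"
  using g_fun_eq_h_fun[of 0] by simp

lemma g_fun_minus_pi_squared: "g_fun (- of_real (pi\<^sup>2)) = 0"
proof -
  have "(\<lambda>n. (- 1) ^ n / fact (2 * n + 1) * pi ^ (2 * n + 1)) sums 0"
    using sin_paired[of pi] by simp
  moreover have "(- 1) ^ n / fact (2 * n + 1) * pi ^ (2 * n + 1) = pi * (g_coeff n * (- pi\<^sup>2) ^ n)" for n
    by (simp add: g_coeff_def power_mult power_minus[of "pi\<^sup>2"])
  ultimately have "(\<lambda>n. pi * (g_coeff n * (- pi\<^sup>2) ^ n)) sums 0" by simp
  then have "(\<lambda>n. g_coeff n * (- pi\<^sup>2) ^ n) sums 0"
    using sums_mult_D[of pi] by fastforce
  then have "(\<lambda>n. of_real (g_coeff n * (- pi\<^sup>2) ^ n) :: complex) sums of_real 0"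
    by (rule sums_of_real)
  then have "(\<lambda>n. of_real (g_coeff n) * (- of_real (pi\<^sup>2)) ^ n :: complex) sums 0"
    by simp
  then show ?thesis unfolding g_fun_power_series by (rule sums_unique[symmetric])
qed

lemma h_fun_minus_pi_squared: "h_fun (- of_real (pi\<^sup>2)) = of_real (1 / pi\<^sup>2)"
  using g_fun_eq_h_fun[of "- of_real (pi\<^sup>2)"] g_fun_minus_pi_squared
  by (simp add: field_simps)

lemma g_fun_nonconstant: "\<not> g_fun constant_on UNIV"
  unfolding constant_on_def by (metis UNIV_I g_fun_zero g_fun_minus_pi_squared zero_neq_one)

lemma pi_squared_bounds: "986 / 100 \<le> pi\<^sup>2" "pi\<^sup>2 \<le> (987 / 100 :: real)"
proof -
  have "3.141592653588 \<le> pi" "pi \<le> 3.1415926535899" using pi_approx by auto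
  then have "(3.141592653588 :: real)\<^sup>2 \<le> pi\<^sup>2" "pi\<^sup>2 \<le> (3.1415926535899 :: real)\<^sup>2"
    by (intro power_mono; simp)+
  then show "986 / 100 \<le> pi\<^sup>2" "pi\<^sup>2 \<le> (987 / 100 :: real)" by (simp_all add: power2_eq_square)
qed

lemma g_coeff_5: "g_coeff 5 = 1 / 39916800"
  by (simp add: g_coeff_def fact_numeral)

text \<open>The right-hand side is the sum of the first four terms of Re g'(z) for |z| = r,
  written in x = Re z.\<close>

lemma deriv_initial_terms_ge:
  fixes r x :: real
  assumes "986 / 100 \<le> r" "r \<le> 987 / 100" "- r \<le> x" "x \<le> r"
  shows "45 / 1000 \<le> 1/6 + x/60 + (2 * x\<^sup>2 - r\<^sup>2) / 1680 + (4 * x ^ 3 - 3 * r\<^sup>2 * x) / 90720"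
proof -
  define s where "s = x + r"
  have s: "0 \<le> s" "s \<le> 2 * r" using assms by (auto simp: s_def)
  define K where "K = (15120 - 1512 * r + 54 * r\<^sup>2 - r ^ 3) / 90720"
  define A where "A = (1512 - 216 * r + 9 * r\<^sup>2) / 90720"
  define B where "B = (108 - 12 * r) / 90720"
  have expand: "1/6 + x/60 + (2 * x\<^sup>2 - r\<^sup>2) / 1680 + (4 * x ^ 3 - 3 * r\<^sup>2 * x) / 90720
      = K + s * (A + B * s) + s ^ 3 / 22680"
    unfolding K_def A_def B_def s_def by (simp add: field_simps power2_eq_square power3_eq_cube)
  have "r\<^sup>2 \<le> (987 / 100)\<^sup>2" "(986 / 100)\<^sup>2 \<le> r\<^sup>2" "r ^ 3 \<le> (987 / 100) ^ 3"
    using assms by (intro power_mono; simp)+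
  then have r2: "r\<^sup>2 \<le> 974169 / 10000" "972196 / 10000 \<le> r\<^sup>2" and r3: "r ^ 3 \<le> 961504803 / 1000000"
    by (simp_all add: power2_eq_square power3_eq_cube)
  have AB: "0 \<le> A + B * s"
  proof -
    have "B \<le> 0" using assms by (simp add: B_def)
    then have "A + B * (2 * r) \<le> A + B * s" using s by (simp add: mult_left_mono_neg)
    moreover have "A + B * (2 * r) = (1512 - 15 * r\<^sup>2) / 90720"
      by (simp add: A_def B_def field_simps power2_eq_square)
    moreover have "0 \<le> (1512 - 15 * r\<^sup>2) / 90720" using r2 by simp
    ultimately show ?thesis by linarith
  qed
  have "4100 \<le> 15120 - 1512 * r + 54 * r\<^sup>2 - r ^ 3" using assms r2 r3 by linarith
  then have "45 / 1000 \<le> K" unfolding K_def by simp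
  moreover have "0 \<le> s * (A + B * s)" "0 \<le> s ^ 3 / 22680" using s AB by simp_all
  ultimately show ?thesis unfolding expand by linarith
qed

lemma g_deriv_coeff_tail_le:
  fixes r :: real
  assumes r: "0 \<le> r" "r \<le> 10"
  shows "summable (\<lambda>n. g_deriv_coeff (n + 4) * r ^ (n + 4))"
    and "(\<Sum>n. g_deriv_coeff (n + 4) * r ^ (n + 4)) \<le> 1 / 500"
proof -
  define a where "a n = g_deriv_coeff (n + 4) * r ^ (n + 4)" for n
  have ratio: "a (Suc n) \<le> 1 / 10 * a n" for n
  proof -
    have "(real n + 6) * r / ((2 * real n + 12) * (2 * real n + 13)) = r / (2 * (2 * real n + 13))"
      by (simp add: divide_simps) (simp add: algebra_simps)
    also have "\<dots> \<le> 10 / (2 * 13)" using r by (intro frac_le) auto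
    also have "\<dots> \<le> (real n + 5) / 10" by simp
    finally have "(real n + 6) * r / ((2 * real n + 12) * (2 * real n + 13)) \<le> (real n + 5) / 10" .
    then have "g_coeff (n + 5) * r ^ (n + 4) * ((real n + 6) * r / ((2 * real n + 12) * (2 * real n + 13)))
        \<le> g_coeff (n + 5) * r ^ (n + 4) * ((real n + 5) / 10)"
      using r g_coeff_nonneg by (intro mult_left_mono) auto
    moreover have "a (Suc n) = g_coeff (n + 5) * r ^ (n + 4) * ((real n + 6) * r / ((2 * real n + 12) * (2 * real n + 13)))"
      using g_coeff_Suc[of "n + 5"] power_Suc[of r "n + 4"]
      by (simp add: a_def g_deriv_coeff_def algebra_simps)
    moreover have "1 / 10 * a n = g_coeff (n + 5) * r ^ (n + 4) * ((real n + 5) / 10)"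
      by (simp add: a_def g_deriv_coeff_def algebra_simps)
    ultimately show ?thesis by simp
  qed
  have nonneg: "0 \<le> a n" for n using r by (simp add: a_def g_deriv_coeff_def g_coeff_nonneg)
  show "summable (\<lambda>n. g_deriv_coeff (n + 4) * r ^ (n + 4))"
    using suminf_le_ratio_bound(1)[of a, OF nonneg ratio] by (simp add: a_def[abs_def])
  have "r ^ 4 \<le> 10 ^ 4" using r by (intro power_mono) auto
  then have "a 0 \<le> 1 / 500 * (1 - 1 / 10)"
    by (simp add: a_def g_deriv_coeff_def g_coeff_5)
  then show "(\<Sum>n. g_deriv_coeff (n + 4) * r ^ (n + 4)) \<le> 1 / 500"
    using suminf_le_ratio_bound(2)[of a, OF nonneg ratio] by (simp add: a_def[abs_def])
qed

lemma Re_deriv_g_fun_ge_on_circle: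
  assumes "cmod z = pi\<^sup>2"
  shows "1 / 25 \<le> Re (deriv g_fun z)"
proof -
  define r where "r = pi\<^sup>2"
  have r: "986 / 100 \<le> r" "r \<le> 987 / 100" using pi_squared_bounds by (simp_all add: r_def)
  have z: "cmod z = r" using assms by (simp add: r_def)
  define x where "x = Re z"
  have x: "- r \<le> x" "x \<le> r" using abs_Re_le_cmod[of z] z by (auto simp: x_def)
  define t where "t n = g_deriv_coeff n * Re (z ^ n)" for n
  have "t sums Re (deriv g_fun z)"
    unfolding t_def deriv_g_fun by (rule sums_Re_real_power_series[OF summable_g_deriv_coeff])
  moreover have "- (g_deriv_coeff (n + 4) * r ^ (n + 4)) \<le> t (n + 4)" for n
  proof -
    have "\<bar>Re (z ^ (n + 4))\<bar> \<le> r ^ (n + 4)"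
      using abs_Re_le_cmod[of "z ^ (n + 4)"] z by (simp add: norm_power)
    then have "\<bar>t (n + 4)\<bar> \<le> g_deriv_coeff (n + 4) * r ^ (n + 4)"
      unfolding t_def abs_mult using g_deriv_coeff_nonneg by (simp add: mult_left_mono)
    then show ?thesis by simp
  qed
  ultimately have "(\<Sum>i<4. t i) - (\<Sum>n. g_deriv_coeff (n + 4) * r ^ (n + 4)) \<le> Re (deriv g_fun z)"
    using g_deriv_coeff_tail_le(1) r by (intro sums_ge_partial_sum_minus_tail) auto
  moreover have "(\<Sum>i<4. t i) = t 0 + t 1 + t 2 + t 3" by (simp add: eval_nat_numeral)
  moreover have "t 0 + t 1 + t 2 + t 3
      = 1/6 + x/60 + (2 * x\<^sup>2 - r\<^sup>2) / 1680 + (4 * x ^ 3 - 3 * r\<^sup>2 * x) / 90720"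
    unfolding t_def Re_power_on_circle[OF z, folded x_def]
    by (simp add: g_deriv_coeff_def g_coeff_def fact_numeral x_def)
  ultimately show ?thesis
    using deriv_initial_terms_ge[OF r x] g_deriv_coeff_tail_le(2)[of r] r by linarith
qed

text \<open>The right-hand side is the sum of the first four terms of Re (h z - h (-r)) for
  |z| = r, divided by s = Re z + r.\<close>

lemma h_initial_terms_ge:
  fixes r s :: real
  assumes "986 / 100 \<le> r" "r \<le> 987 / 100" "0 \<le> s"
  shows "28 / 10000 \<le> 1/120 + 2 * (s - 2 * r) / 5040 + (2 * s - 3 * r)\<^sup>2 / 362880"
proof -
  have "1/120 + 2 * (s - 2 * r) / 5040 + (2 * s - 3 * r)\<^sup>2 / 362880 =
        (1/120 - 4 * r / 5040 + 9 * r\<^sup>2 / 362880) + s * (2 / 5040 - 12 * r / 362880 + 4 * s / 362880)"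
    by (simp add: field_simps power2_eq_square)
  moreover have "0 \<le> s * (2 / 5040 - 12 * r / 362880 + 4 * s / 362880)" using assms by simp
  moreover have "(986 / 100)\<^sup>2 \<le> r\<^sup>2" using assms by (intro power_mono) auto
  moreover have "(986 / 100 :: real)\<^sup>2 = 972196 / 10000" by (simp add: power2_eq_square)
  ultimately show ?thesis using assms by linarith
qed

lemma h_tail_le:
  fixes r :: real
  assumes r: "0 \<le> r" "r \<le> 10"
  shows "summable (\<lambda>n. (real (n + 4))\<^sup>2 * r ^ (n + 3) * g_coeff (n + 5))"
    and "(\<Sum>n. (real (n + 4))\<^sup>2 * r ^ (n + 3) * g_coeff (n + 5)) \<le> 1 / 1000"
proof -
  define a where "a n = (real (n + 4))\<^sup>2 * r ^ (n + 3) * g_coeff (n + 5)" for n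
  have ratio: "a (Suc n) \<le> 1 / 5 * a n" for n
  proof -
    have "r / ((2 * real n + 12) * (2 * real n + 13)) \<le> 10 / (12 * 13)"
      using r by (intro frac_le mult_mono) auto
    also have "\<dots> \<le> 1 / 10" by simp
    finally have "r / ((2 * real n + 12) * (2 * real n + 13)) \<le> 1 / 10" .
    moreover have "(real n + 5)\<^sup>2 \<le> 2 * (real n + 4)\<^sup>2"
      by (simp add: power2_eq_square algebra_simps)
    ultimately have "(real n + 5)\<^sup>2 * (r / ((2 * real n + 12) * (2 * real n + 13)))
        \<le> (2 * (real n + 4)\<^sup>2) * (1 / 10)"
      using r by (intro mult_mono) auto
    then have "r ^ (n + 3) * g_coeff (n + 5) * ((real n + 5)\<^sup>2 * (r / ((2 * real n + 12) * (2 * real n + 13))))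
        \<le> r ^ (n + 3) * g_coeff (n + 5) * ((2 * (real n + 4)\<^sup>2) * (1 / 10))"
      using r g_coeff_nonneg by (intro mult_left_mono) auto
    moreover have "a (Suc n) = r ^ (n + 3) * g_coeff (n + 5) * ((real n + 5)\<^sup>2 * (r / ((2 * real n + 12) * (2 * real n + 13))))"
      using g_coeff_Suc[of "n + 5"] power_Suc[of r "n + 3"]
      by (simp add: a_def algebra_simps)
    moreover have "1 / 5 * a n = r ^ (n + 3) * g_coeff (n + 5) * ((2 * (real n + 4)\<^sup>2) * (1 / 10))"
      by (simp add: a_def algebra_simps)
    ultimately show ?thesis by simp
  qed
  have nonneg: "0 \<le> a n" for n using r by (simp add: a_def g_coeff_nonneg)
  show "summable (\<lambda>n. (real (n + 4))\<^sup>2 * r ^ (n + 3) * g_coeff (n + 5))"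
    using suminf_le_ratio_bound(1)[of a, OF nonneg ratio] by (simp add: a_def[abs_def])
  have "r ^ 3 \<le> 10 ^ 3" using r by (intro power_mono) auto
  then have "a 0 \<le> 1 / 1000 * (1 - 1 / 5)"
    by (simp add: a_def g_coeff_5)
  then show "(\<Sum>n. (real (n + 4))\<^sup>2 * r ^ (n + 3) * g_coeff (n + 5)) \<le> 1 / 1000"
    using suminf_le_ratio_bound(2)[of a, OF nonneg ratio] by (simp add: a_def[abs_def])
qed

lemma norm_g_fun_minus_one_ge_on_circle:
  assumes "cmod z = pi\<^sup>2"
  shows "1 \<le> cmod (g_fun z - 1)"
proof -
  define r where "r = pi\<^sup>2"
  have r: "986 / 100 \<le> r" "r \<le> 987 / 100" using pi_squared_bounds by (simp_all add: r_def)
  have z: "cmod z = r" using assms by (simp add: r_def)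
  define x where "x = Re z"
  define s where "s = x + r"
  have "0 \<le> s" using abs_Re_le_cmod[of z] z by (auto simp: x_def s_def)
  define a where "a n = (real (n + 4))\<^sup>2 * r ^ (n + 3) * g_coeff (n + 5)" for n
  define u where "u n = g_coeff (Suc n) * (Re (z ^ n) - (- r) ^ n)" for n
  have "u sums (Re (h_fun z) - 1 / r)"
  proof -
    have "(\<lambda>n. g_coeff (Suc n) * Re (w ^ n)) sums Re (h_fun w)" for w
      unfolding h_fun_def
      by (rule sums_Re_real_power_series) (use summable_g_coeff_shift[of 1 w] in simp)
    from sums_diff[OF this[of z] this[of "- of_real r"]] show ?thesis
      using h_fun_minus_pi_squared
      by (simp add: u_def[abs_def] r_def right_diff_distrib flip: of_real_power)
  qed
  moreover have "- (s * a n) \<le> u (n + 4)" for n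
  proof -
    have "- ((real (n + 4))\<^sup>2 * r ^ (n + 3) * s) \<le> Re (z ^ (n + 4)) - (- r) ^ (n + 4)"
      using Re_power_minus_power_ge[OF z, of "n + 4"] r by (simp add: s_def x_def add.commute)
    then have "g_coeff (n + 5) * - ((real (n + 4))\<^sup>2 * r ^ (n + 3) * s)
        \<le> g_coeff (n + 5) * (Re (z ^ (n + 4)) - (- r) ^ (n + 4))"
      using g_coeff_nonneg by (rule mult_left_mono)
    then show ?thesis by (simp add: u_def a_def algebra_simps)
  qed
  moreover have "summable a" and "suminf a \<le> 1 / 1000"
    using h_tail_le[of r] r unfolding a_def[abs_def] by auto
  ultimately have "(\<Sum>i<4. u i) - (\<Sum>n. s * a n) \<le> Re (h_fun z) - 1 / r"
    by (intro sums_ge_partial_sum_minus_tail summable_mult)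
  moreover have "(\<Sum>n. s * a n) \<le> s * (1 / 1000)"
    using suminf_mult[OF \<open>summable a\<close>, of s] mult_left_mono[OF \<open>suminf a \<le> 1 / 1000\<close> \<open>0 \<le> s\<close>]
    by simp
  moreover have "(\<Sum>i<4. u i) = u 0 + u 1 + u 2 + u 3" by (simp add: eval_nat_numeral)
  moreover have "u 0 + u 1 + u 2 + u 3
      = s * (1/120 + 2 * (s - 2 * r) / 5040 + (2 * s - 3 * r)\<^sup>2 / 362880)"
    unfolding u_def Re_power_on_circle[OF z, folded x_def]
    by (simp add: g_coeff_def fact_numeral x_def s_def field_simps power2_eq_square power3_eq_cube)
  moreover have "s * (28 / 10000) \<le> s * (1/120 + 2 * (s - 2 * r) / 5040 + (2 * s - 3 * r)\<^sup>2 / 362880)"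
    using h_initial_terms_ge[OF r \<open>0 \<le> s\<close>] \<open>0 \<le> s\<close> by (rule mult_left_mono)
  ultimately have "1 / r \<le> Re (h_fun z)" using \<open>0 \<le> s\<close> by linarith
  have "cmod (g_fun z - 1) = r * cmod (h_fun z)" by (simp add: g_fun_eq_h_fun norm_mult z)
  also have "\<dots> \<ge> r * (1 / r)"
    using \<open>1 / r \<le> Re (h_fun z)\<close> complex_Re_le_cmod[of "h_fun z"] r by (intro mult_left_mono) auto
  finally show ?thesis using r by simp
qed

lemma Re_deriv_g_fun_ge:
  assumes "cmod z \<le> pi\<^sup>2"
  shows "1 / 25 \<le> Re (deriv g_fun z)"
proof (rule minimum_real_frontier[of "deriv g_fun" "cball 0 (pi\<^sup>2)"])
  have "deriv g_fun holomorphic_on UNIV"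
    by (rule holomorphic_deriv[OF holomorphic_g_fun open_UNIV])
  then show "deriv g_fun holomorphic_on interior (cball 0 (pi\<^sup>2))"
    and "continuous_on (closure (cball 0 (pi\<^sup>2))) (deriv g_fun)"
    by (auto intro: holomorphic_on_subset holomorphic_on_imp_continuous_on)
  show "1 / 25 \<le> Re (deriv g_fun w)" if "w \<in> frontier (cball 0 (pi\<^sup>2))" for w
    using that Re_deriv_g_fun_ge_on_circle by (simp add: frontier_cball)
qed (use assms in auto)

lemma inj_on_g_fun_cball: "inj_on g_fun (cball 0 (pi\<^sup>2))"
  by (rule inj_on_if_Re_deriv_pos[OF convex_cball has_field_derivative_g_fun[folded deriv_g_fun]])
    (use Re_deriv_g_fun_ge in fastforce)

lemma continuous_on_g_fun: "continuous_on S g_fun"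
  using holomorphic_on_imp_continuous_on[OF holomorphic_g_fun] continuous_on_subset by blast

lemma homeomorphism_g_fun_sphere:
  "\<exists>h. homeomorphism (sphere 0 (pi\<^sup>2)) (g_fun ` sphere 0 (pi\<^sup>2)) g_fun h"
  using inj_on_subset[OF inj_on_g_fun_cball sphere_cball]
  by (rule homeomorphism_compact[OF compact_sphere continuous_on_g_fun refl])

lemma ball_subset_bounded_component:
  "\<exists>C \<in> components (- (g_fun ` sphere 0 (pi\<^sup>2))). bounded C \<and> ball 1 1 \<subseteq> C"
proof -
  define C where "C = connected_component_set (- (g_fun ` sphere 0 (pi\<^sup>2))) 1"
  have disjoint: "ball 1 1 \<inter> g_fun ` sphere 0 (pi\<^sup>2) = {}"
    using norm_g_fun_minus_one_ge_on_circle by (force simp: dist_norm norm_minus_commute)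
  then have "ball 1 1 \<subseteq> C"
    unfolding C_def by (intro connected_component_maximal) auto
  moreover have "C \<in> components (- (g_fun ` sphere 0 (pi\<^sup>2)))"
  proof -
    have "1 \<notin> g_fun ` sphere 0 (pi\<^sup>2)"
      using disjoint by (metis IntI centre_in_ball empty_iff zero_less_one)
    then show ?thesis unfolding C_def by (intro componentsI) simp
  qed
  moreover have "C \<subseteq> g_fun ` ball 0 (pi\<^sup>2)"
    unfolding C_def using g_fun_zero
    by (intro connected_component_image_sphere_subset[OF holomorphic_g_fun open_UNIV connected_UNIV
          subset_UNIV g_fun_nonconstant]) force
  then have "bounded C"
    using compact_continuous_image[OF continuous_on_g_fun compact_cball] ball_subset_cball
    by (meson bounded_subset compact_imp_bounded image_mono)
  ultimately show ?thesis by blast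
qed

theorem lemma3p4:
  shows "g_fun holomorphic_on UNIV
    \<and> (\<forall>z. cmod z < pi\<^sup>2 \<longrightarrow> deriv g_fun z \<noteq> 0)
    \<and> (\<exists>h. homeomorphism (sphere 0 (pi\<^sup>2)) (g_fun ` sphere 0 (pi\<^sup>2)) g_fun h)
    \<and> (\<exists>C \<in> components (- (g_fun ` sphere 0 (pi\<^sup>2))). bounded C \<and> ball 1 1 \<subseteq> C)"
proof (intro conjI allI impI)
  fix z :: complex
  assume "cmod z < pi\<^sup>2"
  then have "1 / 25 \<le> Re (deriv g_fun z)" by (intro Re_deriv_g_fun_ge) simp
  then show "deriv g_fun z \<noteq> 0" by auto
qed (fact holomorphic_g_fun homeomorphism_g_fun_sphere ball_subset_bounded_component)+

end
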